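(* Let the complex extension, $f(z)$, of $f(x)$ be entire. Then for all $n = 1, 2, 3, \dots$ and $0<\omega<a$, the following equality holds \begin{equation} \int_0^a \frac{f(x)}{(\omega + x)^n} \mathrm{d}x = \sum_{k=0}^{\infty} \binom{-n}{k} \omega^{ k}\, \mathrm{FP}\!\int_{0}^{a} \frac{f(x)}{x^{k + n}}\mathrm{d}x + \Delta_{\mathrm{sc}}^{(n)}(\omega) \end{equation} where \begin{equation} \Delta_{\mathrm{sc}}^{(1)}(\omega)= - f(-\omega) \ln\omega , \end{equation} \begin{eqnarray} \Delta_{\mathrm{sc}}^{(n)}(\omega)&=&-\;\frac{1}{\left(n-1\right)!}f^{(n-1)}\!\left(-\omega\right)\, \ln\omega \nonumber \\ && +\,\,\sum_{k=0}^{n-2}\frac{f^{\left(k\right)}\left(-\omega\right)}{k!\,\left(n-1-k\right) \; \omega^{n-k-1}}, \;\;\; n=2, 3, \dots \end{eqnarray}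
   Context: Here $0<a<\infty$ and $\mathrm{FP}\!\int_0^a g(x)x^{-p}\,\mathrm{d}x$ denotes the (Hadamard) finite part of a possibly divergent integral: for $0<\epsilon<a$ one writes $\int_\epsilon^a g(x)x^{-p}\,\mathrm{d}x = C_\epsilon + D_\epsilon$, where $C_\epsilon$ collects the terms having a finite limit as $\epsilon\to0$ and $D_\epsilon$ the terms diverging in that limit, and sets the finite part equal to $\lim_{\epsilon\to0}C_\epsilon$. When the integral converges, the finite part coincides with the ordinary integral. *)

theory Defs
  imports "HOL-Analysis.Analysis"
begin

text \<open>The integral over \<open>[\<epsilon>,a]\<close> is split as \<open>C_\<epsilon> + D_\<epsilon>\<close>, where the
  divergent part \<open>D_\<epsilon>\<close> is a combination of the divergent functions
  \<open>\<epsilon>^{-j}\<close> (\<open>j \<ge> 1\<close>) and \<open>ln \<epsilon>\<close>; the finite part is \<open>lim C_\<epsilon>\<close>.\<close>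

definition has_FP :: "(real \<Rightarrow> real) \<Rightarrow> nat \<Rightarrow> real \<Rightarrow> real \<Rightarrow> bool" where
  "has_FP g p a L \<longleftrightarrow>
     (\<exists>(c :: nat \<Rightarrow> real) (m :: nat).
        ((\<lambda>\<epsilon>. integral {\<epsilon>..a} (\<lambda>x. g x / x ^ p)
              - ((\<Sum>j=1..m. c j / \<epsilon> ^ j) + c 0 * ln \<epsilon>)) \<longlongrightarrow> L) (at_right 0))"

definition FP_integral :: "(real \<Rightarrow> real) \<Rightarrow> nat \<Rightarrow> real \<Rightarrow> real" where
  "FP_integral g p a = (THE L. has_FP g p a L)"

definition Delta_sc :: "(real \<Rightarrow> real) \<Rightarrow> nat \<Rightarrow> real \<Rightarrow> real" where
  "Delta_sc f n \<omega> =
    (if n = 1 then - f (-\<omega>) * ln \<omega>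
     else - (1 / fact (n - 1)) * (deriv ^^ (n - 1)) f (-\<omega>) * ln \<omega>
          + (\<Sum>k=0..n-2. (deriv ^^ k) f (-\<omega>)
                / (fact k * real (n - 1 - k) * \<omega> ^ (n - k - 1))))"

end

theory Submission
  imports Defs "HOL-Complex_Analysis.Complex_Analysis" "HOL-Real_Asymp.Real_Asymp"
begin

text \<open>
  For an entire \<open>g(x) = \<Sum> c_j x^j\<close> the finite part of \<open>\<integral>_0^a g(x) / x^p dx\<close> is explicit:
  each singular term \<open>c_j x^(j-p)\<close>, \<open>j < p\<close>, contributes the value at \<open>a\<close> of its primitive
  and the regular rest contributes its ordinary integral; moreover \<open>\<omega>^p\<close> times this finite
  part tends to \<open>0\<close> as \<open>p \<rightarrow> \<infinity>\<close> when \<open>\<omega> < a\<close>. For \<open>n = 1\<close> write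
  \<open>f(x) = f(-\<omega>) + (x + \<omega>) q(x)\<close> with \<open>q\<close> entire: the finite part of \<open>f(x) / x^(k+1)\<close> splits
  into \<open>f(-\<omega>)\<close> times the \<open>k\<close>-th term of the series of \<open>ln (\<omega> + a)\<close> and finite parts of \<open>q\<close>,
  which telescope to \<open>\<integral>_0^a q\<close>. The case \<open>n + 1\<close> follows from the case \<open>n\<close> by
  differentiating both sides in \<open>\<omega>\<close> (the series termwise, the integral under the integral
  sign), using \<open>d/d\<omega> \<Delta>_sc^(n) = -n \<Delta>_sc^(n+1)\<close>.
\<close>

section \<open>Divergent parts and uniqueness of the finite part\<close>

definition divergent_part :: "(real \<Rightarrow> real) \<Rightarrow> bool" where
  "divergent_part K \<longleftrightarrow>
     (\<exists>(c :: nat \<Rightarrow> real) m. K = (\<lambda>\<epsilon>. (\<Sum>j=1..m. c j / \<epsilon> ^ j) + c 0 * ln \<epsilon>))"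

lemma has_FP_iff_divergent_part:
  "has_FP g p a L \<longleftrightarrow>
     (\<exists>K. divergent_part K \<and> ((\<lambda>\<epsilon>. integral {\<epsilon>..a} (\<lambda>x. g x / x ^ p) - K \<epsilon>) \<longlongrightarrow> L) (at_right 0))"
  unfolding has_FP_def divergent_part_def by auto

lemma divergent_part_zero: "divergent_part (\<lambda>_. 0)"
  unfolding divergent_part_def by (intro exI[of _ "\<lambda>_. 0"] exI[of _ 0]) simp

lemma divergent_part_ln: "divergent_part ln"
  unfolding divergent_part_def by (intro exI[of _ "\<lambda>j. of_bool (j = 0)"] exI[of _ 0]) simp

lemma divergent_part_inverse_power:
  assumes "1 \<le> i"
  shows "divergent_part (\<lambda>\<epsilon>. 1 / \<epsilon> ^ i)"
  unfolding divergent_part_def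
proof (intro exI[of _ "\<lambda>j. of_bool (j = i)"] exI[of _ i] ext)
  fix \<epsilon> :: real
  have "(\<Sum>j=1..i. of_bool (j = i) / \<epsilon> ^ j) = (\<Sum>j=1..i. if j = i then 1 / \<epsilon> ^ j else 0)"
    by (rule sum.cong) auto
  then show "1 / \<epsilon> ^ i = (\<Sum>j=1..i. of_bool (j = i) / \<epsilon> ^ j) + of_bool (0 = i) * ln \<epsilon>"
    using assms by simp
qed

lemma divergent_part_cmult:
  assumes "divergent_part K"
  shows "divergent_part (\<lambda>\<epsilon>. \<alpha> * K \<epsilon>)"
proof -
  obtain c m where "K = (\<lambda>\<epsilon>. (\<Sum>j=1..m. c j / \<epsilon> ^ j) + c 0 * ln \<epsilon>)"
    using assms unfolding divergent_part_def by blast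
  then show ?thesis
    unfolding divergent_part_def
    by (intro exI[of _ "\<lambda>j. \<alpha> * c j"] exI[of _ m]) (auto simp: sum_distrib_left algebra_simps)
qed

lemma divergent_part_add:
  assumes "divergent_part K1" "divergent_part K2"
  shows "divergent_part (\<lambda>\<epsilon>. K1 \<epsilon> + K2 \<epsilon>)"
proof -
  obtain c1 m1 c2 m2 where
    K1: "K1 = (\<lambda>\<epsilon>. (\<Sum>j=1..m1. c1 j / \<epsilon> ^ j) + c1 0 * ln \<epsilon>)" and
    K2: "K2 = (\<lambda>\<epsilon>. (\<Sum>j=1..m2. c2 j / \<epsilon> ^ j) + c2 0 * ln \<epsilon>)"
    using assms unfolding divergent_part_def by blast
  define m where "m = max m1 m2"
  define pad :: "(nat \<Rightarrow> real) \<Rightarrow> nat \<Rightarrow> nat \<Rightarrow> real"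
    where "pad = (\<lambda>c' m' j. if j \<le> m' then c' j else 0)"
  have padded: "(\<Sum>j=1..m. pad c' m' j / \<epsilon> ^ j) = (\<Sum>j=1..m'. c' j / \<epsilon> ^ j)"
    if "m' \<le> m" for c' m' and \<epsilon> :: real
  proof -
    have "(\<Sum>j=1..m. pad c' m' j / \<epsilon> ^ j) = (\<Sum>j=1..m'. pad c' m' j / \<epsilon> ^ j)"
      using that by (intro sum.mono_neutral_right) (auto simp: pad_def)
    also have "\<dots> = (\<Sum>j=1..m'. c' j / \<epsilon> ^ j)"
      by (intro sum.cong) (auto simp: pad_def)
    finally show ?thesis .
  qed
  show ?thesis
    unfolding divergent_part_def
  proof (intro exI[of _ "\<lambda>j. pad c1 m1 j + pad c2 m2 j"] exI[of _ m] ext)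
    fix \<epsilon> :: real
    show "K1 \<epsilon> + K2 \<epsilon> = (\<Sum>j=1..m. (pad c1 m1 j + pad c2 m2 j) / \<epsilon> ^ j)
                         + (pad c1 m1 0 + pad c2 m2 0) * ln \<epsilon>"
      using padded[of m1 c1 \<epsilon>] padded[of m2 c2 \<epsilon>]
      by (simp add: K1 K2 m_def add_divide_distrib sum.distrib algebra_simps) (simp add: pad_def)
  qed
qed

lemma divergent_part_diff:
  assumes "divergent_part K1" "divergent_part K2"
  shows "divergent_part (\<lambda>\<epsilon>. K1 \<epsilon> - K2 \<epsilon>)"
  using divergent_part_add[OF assms(1) divergent_part_cmult[OF assms(2), of "-1"]] by simp

lemma divergent_part_sum:
  assumes "\<And>i. i \<in> S \<Longrightarrow> divergent_part (K i)"
  shows "divergent_part (\<lambda>\<epsilon>. \<Sum>i\<in>S. K i \<epsilon>)"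
  using assms
  by (induction S rule: infinite_finite_induct) (simp_all add: divergent_part_zero divergent_part_add)

lemma tendsto_cmult_ln_imp_zero:
  assumes "((\<lambda>\<epsilon>. c * ln \<epsilon>) \<longlongrightarrow> L) (at_right (0::real))"
  shows "c = 0 \<and> L = 0"
proof (cases "c = 0")
  case True
  with assms have "((\<lambda>_. 0) \<longlongrightarrow> L) (at_right (0::real))" by simp
  then have "L = 0" by (rule tendsto_unique[OF trivial_limit_at_right_real _ tendsto_const])
  with True show ?thesis by simp
next
  case False
  have "((\<lambda>\<epsilon>. c * ln \<epsilon> / c) \<longlongrightarrow> L / c) (at_right (0::real))"
    using assms by (intro tendsto_divide) (auto simp: False)
  with False have "(ln \<longlongrightarrow> L / c) (at_right (0::real))" by simp
  moreover have "filterlim ln at_infinity (at_right (0::real))"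
    using ln_at_0 filterlim_at_bot_imp_at_infinity by blast
  ultimately show ?thesis
    using not_tendsto_and_filterlim_at_infinity[of "at_right (0::real)"] by auto
qed

lemma times_inverse_power_sum:
  fixes \<epsilon> :: real
  assumes "\<epsilon> \<noteq> 0"
  shows "\<epsilon> * (\<Sum>j=1..Suc m. c j / \<epsilon> ^ j) = c 1 + (\<Sum>j=1..m. c (Suc j) / \<epsilon> ^ j)"
proof -
  have "(\<Sum>j=1..Suc m. c j / \<epsilon> ^ j) = c 1 / \<epsilon> + (\<Sum>j=Suc 1..Suc m. c j / \<epsilon> ^ j)"
    by (simp add: sum.atLeast_Suc_atMost)
  also have "(\<Sum>j=Suc 1..Suc m. c j / \<epsilon> ^ j) = (\<Sum>j=1..m. c (Suc j) / \<epsilon> ^ Suc j)"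
    by (rule sum.shift_bounds_cl_Suc_ivl)
  also have "\<epsilon> * (c 1 / \<epsilon> + (\<Sum>j=1..m. c (Suc j) / \<epsilon> ^ Suc j))
               = c 1 + (\<Sum>j=1..m. c (Suc j) / \<epsilon> ^ j)"
    using assms by (simp add: distrib_left sum_distrib_left)
  finally show ?thesis .
qed

text \<open>Multiplying by \<open>\<epsilon>\<close> strips off the top singularity; \<open>\<epsilon> ln \<epsilon> \<rightarrow> 0\<close> keeps
  the logarithm harmless.\<close>

lemma divergent_coeffs_tendsto_imp_zero:
  assumes "((\<lambda>\<epsilon>. (\<Sum>j=1..m. c j / \<epsilon> ^ j) + c 0 * ln \<epsilon>) \<longlongrightarrow> L) (at_right (0::real))"
  shows "L = 0 \<and> (\<forall>j\<le>m. c j = 0)"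
  using assms
proof (induction m arbitrary: c L)
  case 0
  then show ?case using tendsto_cmult_ln_imp_zero by simp
next
  case (Suc m)
  define c' where "c' = (\<lambda>j. if j = 0 then 0 else c (Suc j))"
  let ?K = "\<lambda>\<epsilon>. (\<Sum>j=1..Suc m. c j / \<epsilon> ^ j) + c 0 * ln \<epsilon>"
  have "((\<lambda>\<epsilon>. \<epsilon> * ?K \<epsilon> - c 1 - c 0 * (\<epsilon> * ln \<epsilon>)) \<longlongrightarrow> 0 * L - c 1 - c 0 * 0) (at_right 0)"
    by (intro tendsto_intros Suc.prems) real_asymp
  moreover have "\<forall>\<^sub>F \<epsilon> in at_right 0. \<epsilon> * ?K \<epsilon> - c 1 - c 0 * (\<epsilon> * ln \<epsilon>)
                   = (\<Sum>j=1..m. c' j / \<epsilon> ^ j) + c' 0 * ln \<epsilon>"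
    using eventually_at_right_less[of 0]
  proof eventually_elim
    case (elim \<epsilon>)
    have "(\<Sum>j=1..m. c' j / \<epsilon> ^ j) = (\<Sum>j=1..m. c (Suc j) / \<epsilon> ^ j)"
      by (intro sum.cong) (auto simp: c'_def)
    then show ?case
      using times_inverse_power_sum[of \<epsilon> c m] elim by (simp add: c'_def algebra_simps)
  qed
  ultimately have "((\<lambda>\<epsilon>. (\<Sum>j=1..m. c' j / \<epsilon> ^ j) + c' 0 * ln \<epsilon>) \<longlongrightarrow> - c 1) (at_right 0)"
    by (simp add: tendsto_cong)
  from Suc.IH[OF this] have "c 1 = 0" and "\<forall>j\<le>m. c' j = 0" by auto
  have shifted: "c (Suc i) = 0" if "i \<le> m" for i
  proof -
    have "c' i = 0" using \<open>\<forall>j\<le>m. c' j = 0\<close> that by blast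
    then show ?thesis using \<open>c 1 = 0\<close> by (cases "i = 0") (simp_all add: c'_def)
  qed
  have singular: "c j = 0" if "1 \<le> j" "j \<le> Suc m" for j
    using that shifted[of "j - 1"] by simp
  then have "((\<lambda>\<epsilon>. c 0 * ln \<epsilon>) \<longlongrightarrow> L) (at_right (0::real))"
    using Suc.prems by simp
  from tendsto_cmult_ln_imp_zero[OF this] singular show ?case
    by (metis One_nat_def le_zero_eq not_less_eq_eq)
qed

lemma divergent_part_tendsto_imp_zero:
  assumes "divergent_part K" "(K \<longlongrightarrow> L) (at_right 0)"
  shows "L = 0"
  using assms divergent_coeffs_tendsto_imp_zero unfolding divergent_part_def by blast

lemma has_FP_unique:
  assumes "has_FP g p a L1" "has_FP g p a L2"
  shows "L1 = L2"
proof -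
  obtain K1 K2 where K: "divergent_part K1" "divergent_part K2"
    and "((\<lambda>\<epsilon>. integral {\<epsilon>..a} (\<lambda>x. g x / x ^ p) - K1 \<epsilon>) \<longlongrightarrow> L1) (at_right 0)"
    and "((\<lambda>\<epsilon>. integral {\<epsilon>..a} (\<lambda>x. g x / x ^ p) - K2 \<epsilon>) \<longlongrightarrow> L2) (at_right 0)"
    using assms unfolding has_FP_iff_divergent_part by blast
  then have "((\<lambda>\<epsilon>. (integral {\<epsilon>..a} (\<lambda>x. g x / x ^ p) - K1 \<epsilon>)
                 - (integral {\<epsilon>..a} (\<lambda>x. g x / x ^ p) - K2 \<epsilon>)) \<longlongrightarrow> L1 - L2) (at_right 0)"
    by (intro tendsto_diff)
  then have "((\<lambda>\<epsilon>. K2 \<epsilon> - K1 \<epsilon>) \<longlongrightarrow> L1 - L2) (at_right 0)" by simp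
  from divergent_part_tendsto_imp_zero[OF divergent_part_diff[OF K(2,1)] this] show ?thesis by simp
qed

lemma FP_integral_unique: "has_FP g p a L \<Longrightarrow> FP_integral g p a = L"
  unfolding FP_integral_def using has_FP_unique by blast

lemma has_FP_linear:
  assumes FP1: "has_FP g1 p1 a L1" and FP2: "has_FP g2 p2 a L2"
    and cont: "continuous_on {0<..} g1" "continuous_on {0<..} g2"
    and h: "\<And>x. 0 < x \<Longrightarrow> h x / x ^ p = \<alpha> * (g1 x / x ^ p1) + \<beta> * (g2 x / x ^ p2)"
  shows "has_FP h p a (\<alpha> * L1 + \<beta> * L2)"
proof -
  obtain K1 K2 where K: "divergent_part K1" "divergent_part K2"
    and lim1: "((\<lambda>\<epsilon>. integral {\<epsilon>..a} (\<lambda>x. g1 x / x ^ p1) - K1 \<epsilon>) \<longlongrightarrow> L1) (at_right 0)"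
    and lim2: "((\<lambda>\<epsilon>. integral {\<epsilon>..a} (\<lambda>x. g2 x / x ^ p2) - K2 \<epsilon>) \<longlongrightarrow> L2) (at_right 0)"
    using FP1 FP2 unfolding has_FP_iff_divergent_part by blast
  have integrable: "(\<lambda>x. g x / x ^ q) integrable_on {\<epsilon>..a}"
    if "0 < \<epsilon>" "continuous_on {0<..} g" for g q \<epsilon>
    using that
    by (intro integrable_continuous_interval continuous_intros) (auto intro: continuous_on_subset)
  have "\<forall>\<^sub>F \<epsilon> in at_right 0.
          \<alpha> * (integral {\<epsilon>..a} (\<lambda>x. g1 x / x ^ p1) - K1 \<epsilon>) + \<beta> * (integral {\<epsilon>..a} (\<lambda>x. g2 x / x ^ p2) - K2 \<epsilon>)
        = integral {\<epsilon>..a} (\<lambda>x. h x / x ^ p) - (\<alpha> * K1 \<epsilon> + \<beta> * K2 \<epsilon>)"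
    using eventually_at_right_less[of 0]
  proof eventually_elim
    case (elim \<epsilon>)
    have "integral {\<epsilon>..a} (\<lambda>x. h x / x ^ p)
          = integral {\<epsilon>..a} (\<lambda>x. \<alpha> * (g1 x / x ^ p1) + \<beta> * (g2 x / x ^ p2))"
      using elim by (intro integral_cong h) auto
    also have "\<dots> = \<alpha> * integral {\<epsilon>..a} (\<lambda>x. g1 x / x ^ p1) + \<beta> * integral {\<epsilon>..a} (\<lambda>x. g2 x / x ^ p2)"
      by (intro integral_unique has_integral_add has_integral_mult_right integrable_integral
          integrable[OF elim cont(1)] integrable[OF elim cont(2)])
    finally show ?case by (simp add: algebra_simps)
  qed
  moreover have "((\<lambda>\<epsilon>. \<alpha> * (integral {\<epsilon>..a} (\<lambda>x. g1 x / x ^ p1) - K1 \<epsilon>)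
                    + \<beta> * (integral {\<epsilon>..a} (\<lambda>x. g2 x / x ^ p2) - K2 \<epsilon>)) \<longlongrightarrow> \<alpha> * L1 + \<beta> * L2) (at_right 0)"
    by (intro tendsto_intros lim1 lim2)
  ultimately have "((\<lambda>\<epsilon>. integral {\<epsilon>..a} (\<lambda>x. h x / x ^ p) - (\<alpha> * K1 \<epsilon> + \<beta> * K2 \<epsilon>))
                     \<longlongrightarrow> \<alpha> * L1 + \<beta> * L2) (at_right 0)"
    by (rule Lim_transform_eventually[rotated])
  moreover have "divergent_part (\<lambda>\<epsilon>. \<alpha> * K1 \<epsilon> + \<beta> * K2 \<epsilon>)"
    by (intro divergent_part_add divergent_part_cmult K)
  ultimately show ?thesis unfolding has_FP_iff_divergent_part by blast
qed

section \<open>Finite parts of power series\<close>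

definition inv_pow_primitive :: "real \<Rightarrow> nat \<Rightarrow> real" where
  "inv_pow_primitive x i = (if i = 1 then ln x else - 1 / (real (i - 1) * x ^ (i - 1)))"

lemma has_real_derivative_inv_pow_primitive:
  assumes "0 < x" "1 \<le> i"
  shows "((\<lambda>x. inv_pow_primitive x i) has_real_derivative 1 / x ^ i) (at x)"
proof (cases "i = 1")
  case True
  with assms show ?thesis
    unfolding inv_pow_primitive_def by (auto intro!: derivative_eq_intros)
next
  case False
  with assms obtain k where i: "i = Suc (Suc k)"
    by (metis One_nat_def Suc_le_D le_SucE)
  have "0 < x \<Longrightarrow>
      ((\<lambda>x. - 1 / (real (Suc k) * x ^ Suc k)) has_real_derivative 1 / x ^ Suc (Suc k)) (at x)"
    by (rule derivative_eq_intros refl | simp add: divide_simps)+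
  with assms show ?thesis by (simp add: inv_pow_primitive_def i)
qed

lemma has_integral_inverse_power:
  assumes "0 < e" "e \<le> a" "1 \<le> i"
  shows "((\<lambda>x. 1 / x ^ i) has_integral inv_pow_primitive a i - inv_pow_primitive e i) {e..a}"
proof (rule fundamental_theorem_of_calculus)
  fix x assume "x \<in> {e..a}"
  with assms have "0 < x" by auto
  from has_real_derivative_inv_pow_primitive[OF this assms(3)]
  show "((\<lambda>x. inv_pow_primitive x i) has_vector_derivative 1 / x ^ i) (at x within {e..a})"
    by (simp add: has_real_derivative_iff_has_vector_derivative has_vector_derivative_at_within)
qed (use assms in auto)

lemma divergent_part_inv_pow_primitive:
  assumes "1 \<le> i"
  shows "divergent_part (\<lambda>\<epsilon>. inv_pow_primitive \<epsilon> i)"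
proof (cases "i = 1")
  case True
  then show ?thesis using divergent_part_ln by (simp add: inv_pow_primitive_def)
next
  case False
  with assms have "1 \<le> i - 1" by simp
  from divergent_part_cmult[OF divergent_part_inverse_power[OF this], of "- 1 / real (i - 1)"] False
  show ?thesis by (simp add: inv_pow_primitive_def)
qed

lemma divide_le_self_Suc: "0 \<le> y \<Longrightarrow> y / real (Suc m) \<le> y"
  by (simp add: divide_le_eq mult_le_cancel_left1)

definition integrated_coeffs :: "(nat \<Rightarrow> real) \<Rightarrow> nat \<Rightarrow> real" where
  "integrated_coeffs d m = (if m = 0 then 0 else d (m - 1) / real m)"

lemma diffs_integrated_coeffs: "diffs (integrated_coeffs d) = d"
  by (auto simp: diffs_def integrated_coeffs_def)

lemma summable_integrated_coeffs:
  assumes "\<And>x. summable (\<lambda>m. d m * x ^ m)"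
  shows "summable (\<lambda>m. integrated_coeffs d m * x ^ m)"
proof -
  have "summable (\<lambda>m. norm (d m * x ^ m))"
    using powser_insidea[OF assms[of "\<bar>x\<bar> + 1"], of x] by simp
  then have "summable (\<lambda>m. \<bar>x\<bar> * norm (d m * x ^ m))" by (rule summable_mult)
  then have "summable (\<lambda>m. integrated_coeffs d (Suc m) * x ^ Suc m)"
  proof (rule summable_comparison_test'[where N = 0])
    fix m :: nat
    have "norm (integrated_coeffs d (Suc m) * x ^ Suc m) = \<bar>x\<bar> * norm (d m * x ^ m) / real (Suc m)"
      by (simp add: integrated_coeffs_def abs_mult power_abs)
    also have "\<dots> \<le> \<bar>x\<bar> * norm (d m * x ^ m)"
      by (rule divide_le_self_Suc) simp
    finally show "norm (integrated_coeffs d (Suc m) * x ^ Suc m) \<le> \<bar>x\<bar> * norm (d m * x ^ m)" .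
  qed
  then show ?thesis using summable_Suc_iff by blast
qed

lemma has_real_derivative_integrated_series:
  assumes "\<And>x. summable (\<lambda>m. d m * x ^ m)"
  shows "((\<lambda>x. \<Sum>m. integrated_coeffs d m * x ^ m) has_real_derivative (\<Sum>m. d m * x ^ m)) (at x)"
  using termdiffs_strong_converges_everywhere[OF summable_integrated_coeffs[OF assms]]
  by (simp add: diffs_integrated_coeffs)

text \<open>For \<open>g x = \<Sum> c_j x^j\<close>, \<open>shifted_series c p x = (g x - \<Sum>_{j<p} c_j x^j) / x^p\<close> is the
  regular part of \<open>g x / x^p\<close>, and \<open>shifted_primitive c p\<close> is its primitive vanishing at \<open>0\<close>.\<close>

definition shifted_series :: "(nat \<Rightarrow> real) \<Rightarrow> nat \<Rightarrow> real \<Rightarrow> real" where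
  "shifted_series c p x = (\<Sum>m. c (m + p) * x ^ m)"

definition shifted_primitive :: "(nat \<Rightarrow> real) \<Rightarrow> nat \<Rightarrow> real \<Rightarrow> real" where
  "shifted_primitive c p x = (\<Sum>m. integrated_coeffs (\<lambda>m. c (m + p)) m * x ^ m)"

definition FP_power_series :: "(nat \<Rightarrow> real) \<Rightarrow> nat \<Rightarrow> real \<Rightarrow> real" where
  "FP_power_series c p a = (\<Sum>i=1..p. c (p - i) * inv_pow_primitive a i) + shifted_primitive c p a"

lemma sum_lessThan_divide_power:
  fixes x :: real
  assumes "x \<noteq> 0"
  shows "(\<Sum>j<p. c j * x ^ j) / x ^ p = (\<Sum>i=1..p. c (p - i) * (1 / x ^ i))"
proof -
  have "(\<Sum>j<p. c j * x ^ j) / x ^ p = (\<Sum>j<p. c j * (1 / x ^ (p - j)))"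
    unfolding sum_divide_distrib
  proof (intro sum.cong refl)
    fix j assume "j \<in> {..<p}"
    then have "x ^ p = x ^ j * x ^ (p - j)" by (simp flip: power_add)
    with assms show "c j * x ^ j / x ^ p = c j * (1 / x ^ (p - j))" by simp
  qed
  also have "\<dots> = (\<Sum>i=1..p. c (p - i) * (1 / x ^ i))"
    by (rule sum.reindex_bij_witness[where i = "\<lambda>i. p - i" and j = "\<lambda>j. p - j"]) auto
  finally show ?thesis .
qed

definition abs_power_sum :: "(nat \<Rightarrow> real) \<Rightarrow> real \<Rightarrow> real" where
  "abs_power_sum c r = (\<Sum>j. \<bar>c j\<bar> * r ^ j)"

locale real_power_series =
  fixes c :: "nat \<Rightarrow> real" and g :: "real \<Rightarrow> real"
  assumes sums_g: "\<And>x. (\<lambda>j. c j * x ^ j) sums g x"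
begin

lemma summable_abs: "summable (\<lambda>j. \<bar>c j\<bar> * r ^ j)" if "0 \<le> r"
proof -
  have "summable (\<lambda>j. norm (c j * r ^ j))"
    by (rule powser_insidea[OF sums_summable[OF sums_g[of "r + 1"]]]) (use that in auto)
  with that show ?thesis by (simp add: abs_mult)
qed

lemma summable_shifted: "summable (\<lambda>m. c (m + p) * x ^ m)"
proof -
  define r where "r = max 1 \<bar>x\<bar>"
  have r: "1 \<le> r" "\<bar>x\<bar> \<le> r" unfolding r_def by auto
  have "summable (\<lambda>m. \<bar>c (m + p)\<bar> * r ^ (m + p))"
    using summable_abs[of r] r summable_iff_shift[of "\<lambda>j. \<bar>c j\<bar> * r ^ j" p] by simp
  then show ?thesis
  proof (rule summable_comparison_test'[where N = 0])
    fix m :: nat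
    have "\<bar>x\<bar> ^ m \<le> r ^ m" using r by (intro power_mono) auto
    also have "\<dots> \<le> r ^ (m + p)" using r by (intro power_increasing) auto
    finally show "norm (c (m + p) * x ^ m) \<le> \<bar>c (m + p)\<bar> * r ^ (m + p)"
      by (simp add: abs_mult power_abs mult_left_mono)
  qed
qed

lemma g_split: "g x = (\<Sum>j<p. c j * x ^ j) + x ^ p * shifted_series c p x"
proof -
  have "(\<lambda>i. c (i + p) * x ^ (i + p)) sums (g x - (\<Sum>i<p. c i * x ^ i))"
    using sums_iff_shift[of "\<lambda>j. c j * x ^ j" p] sums_g[of x] by simp
  moreover have "(\<lambda>i. x ^ p * (c (i + p) * x ^ i)) sums (x ^ p * shifted_series c p x)"
    unfolding shifted_series_def by (intro sums_mult summable_sums summable_shifted)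
  ultimately show ?thesis
    by (simp add: power_add algebra_simps sums_iff)
qed

lemma continuous_on_shifted_series: "continuous_on S (shifted_series c p)"
proof -
  have "isCont (shifted_series c p) x" for x
    using termdiffs_strong_converges_everywhere[OF summable_shifted] DERIV_isCont
    unfolding shifted_series_def[abs_def] by blast
  then show ?thesis by (simp add: continuous_at_imp_continuous_on)
qed

lemma continuous_on_g: "continuous_on S g"
  using continuous_on_shifted_series[of S 0] g_split[of _ 0] by simp

lemma has_real_derivative_shifted_primitive:
  "(shifted_primitive c p has_real_derivative shifted_series c p x) (at x)"
  unfolding shifted_primitive_def[abs_def] shifted_series_def
  by (rule has_real_derivative_integrated_series[OF summable_shifted])

lemma shifted_primitive_tendsto_0: "(shifted_primitive c p \<longlongrightarrow> 0) (at_right 0)"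
proof -
  have "isCont (shifted_primitive c p) 0"
    using has_real_derivative_shifted_primitive DERIV_isCont by blast
  then show ?thesis
    by (simp add: isCont_def filterlim_at_split shifted_primitive_def integrated_coeffs_def)
qed

lemma integral_g_divide_power:
  assumes "0 < e" "e \<le> a"
  shows "integral {e..a} (\<lambda>x. g x / x ^ p)
       = (\<Sum>i=1..p. c (p - i) * (inv_pow_primitive a i - inv_pow_primitive e i))
         + (shifted_primitive c p a - shifted_primitive c p e)"
proof -
  have "((\<lambda>x. (\<Sum>i=1..p. c (p - i) * (1 / x ^ i)) + shifted_series c p x) has_integral
          (\<Sum>i=1..p. c (p - i) * (inv_pow_primitive a i - inv_pow_primitive e i))
          + (shifted_primitive c p a - shifted_primitive c p e)) {e..a}"
  proof (intro has_integral_add has_integral_sum has_integral_mult_right)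
    show "((\<lambda>x. 1 / x ^ i) has_integral inv_pow_primitive a i - inv_pow_primitive e i) {e..a}"
      if "i \<in> {1..p}" for i
      using assms that by (intro has_integral_inverse_power) auto
    show "(shifted_series c p has_integral shifted_primitive c p a - shifted_primitive c p e) {e..a}"
      using assms has_real_derivative_shifted_primitive
      by (intro fundamental_theorem_of_calculus)
         (auto simp: has_real_derivative_iff_has_vector_derivative has_vector_derivative_at_within)
  qed simp
  moreover have "(\<Sum>i=1..p. c (p - i) * (1 / x ^ i)) + shifted_series c p x = g x / x ^ p"
    if "x \<in> {e..a}" for x
    using that assms g_split[of x p] sum_lessThan_divide_power[of x c p]
    by (simp add: add_divide_distrib)
  ultimately show ?thesis
    by (intro integral_unique) (rule has_integral_eq)
qed

lemma integral_g:
  assumes "0 \<le> a"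
  shows "integral {0..a} g = shifted_primitive c 0 a"
proof -
  from assms have "(shifted_series c 0 has_integral shifted_primitive c 0 a - shifted_primitive c 0 0) {0..a}"
    using has_real_derivative_shifted_primitive
    by (intro fundamental_theorem_of_calculus)
       (auto simp: has_real_derivative_iff_has_vector_derivative has_vector_derivative_at_within)
  moreover have "shifted_series c 0 = g" using g_split[of _ 0] by auto
  ultimately show ?thesis
    by (simp add: integral_unique shifted_primitive_def integrated_coeffs_def)
qed

lemma has_FP_g:
  assumes "0 < a"
  shows "has_FP g p a (FP_power_series c p a)"
  unfolding has_FP_iff_divergent_part
proof (intro exI conjI)
  define K where "K = (\<lambda>\<epsilon>. \<Sum>i=1..p. - c (p - i) * inv_pow_primitive \<epsilon> i)"
  show "divergent_part K"
    unfolding K_def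
    by (intro divergent_part_sum divergent_part_cmult divergent_part_inv_pow_primitive) simp
  have "\<forall>\<^sub>F \<epsilon> in at_right 0. \<epsilon> \<in> {0<..<a}"
    using assms by (intro eventually_at_rightI[of 0 a]) auto
  then have "\<forall>\<^sub>F \<epsilon> in at_right 0. integral {\<epsilon>..a} (\<lambda>x. g x / x ^ p) - K \<epsilon>
          = FP_power_series c p a - shifted_primitive c p \<epsilon>"
  proof eventually_elim
    case (elim \<epsilon>)
    then show ?case
      by (simp add: integral_g_divide_power K_def FP_power_series_def algebra_simps
          sum_subtractf sum_negf)
  qed
  moreover have "((\<lambda>\<epsilon>. FP_power_series c p a - shifted_primitive c p \<epsilon>)
                   \<longlongrightarrow> FP_power_series c p a - 0) (at_right 0)"
    by (intro tendsto_intros shifted_primitive_tendsto_0)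
  ultimately show "((\<lambda>\<epsilon>. integral {\<epsilon>..a} (\<lambda>x. g x / x ^ p) - K \<epsilon>)
                     \<longlongrightarrow> FP_power_series c p a) (at_right 0)"
    by (simp add: tendsto_cong)
qed

lemma abs_term_le_abs_power_sum: "0 \<le> r \<Longrightarrow> \<bar>c j\<bar> * r ^ j \<le> abs_power_sum c r"
  unfolding abs_power_sum_def using sum_le_suminf[OF summable_abs, of r "{j}"] by auto

lemma abs_tail_le_abs_power_sum:
  assumes "0 \<le> r"
  shows "(\<Sum>m. \<bar>c (m + p)\<bar> * r ^ (m + p)) \<le> abs_power_sum c r"
proof -
  have "abs_power_sum c r = (\<Sum>m. \<bar>c (m + p)\<bar> * r ^ (m + p)) + (\<Sum>i<p. \<bar>c i\<bar> * r ^ i)"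
    unfolding abs_power_sum_def using suminf_split_initial_segment[OF summable_abs[OF assms], of p]
    by simp
  moreover have "0 \<le> (\<Sum>i<p. \<bar>c i\<bar> * r ^ i)" using assms by (intro sum_nonneg) auto
  ultimately show ?thesis by linarith
qed

lemma abs_shifted_primitive_le:
  assumes a: "0 < a"
  shows "\<bar>shifted_primitive c p a\<bar> \<le> a * abs_power_sum c a / a ^ p"
proof -
  let ?d = "integrated_coeffs (\<lambda>m. c (m + p))"
  define T where "T = (\<lambda>m. \<bar>c (m + p)\<bar> * a ^ (m + p))"
  have "summable T"
    unfolding T_def using summable_abs[of a] a summable_iff_shift[of "\<lambda>j. \<bar>c j\<bar> * a ^ j" p]
    by simp
  have summable_d: "summable (\<lambda>m. \<bar>?d m * a ^ m\<bar>)"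
    using powser_insidea[OF summable_integrated_coeffs[OF summable_shifted[of p], of "a + 1"], of a] a
    by simp
  have "\<bar>shifted_primitive c p a\<bar> \<le> (\<Sum>m. \<bar>?d m * a ^ m\<bar>)"
    unfolding shifted_primitive_def by (rule summable_rabs[OF summable_d])
  also have "\<dots> = (\<Sum>m. \<bar>?d (Suc m) * a ^ Suc m\<bar>)"
    using suminf_split_head[OF summable_d] by (simp add: integrated_coeffs_def)
  also have "\<dots> \<le> (\<Sum>m. a / a ^ p * T m)"
  proof (rule suminf_le)
    fix m
    have "\<bar>?d (Suc m) * a ^ Suc m\<bar> = \<bar>c (m + p)\<bar> * a ^ Suc m / real (Suc m)"
      using a by (simp add: integrated_coeffs_def abs_mult add.commute)
    also have "\<dots> \<le> \<bar>c (m + p)\<bar> * a ^ Suc m"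
      using a by (intro divide_le_self_Suc) simp
    also have "\<dots> = a / a ^ p * T m"
      unfolding T_def using a by (simp add: power_add field_simps)
    finally show "\<bar>?d (Suc m) * a ^ Suc m\<bar> \<le> a / a ^ p * T m" .
  next
    show "summable (\<lambda>m. \<bar>?d (Suc m) * a ^ Suc m\<bar>)"
      using summable_d by (subst summable_Suc_iff)
    show "summable (\<lambda>m. a / a ^ p * T m)" by (intro summable_mult \<open>summable T\<close>)
  qed
  also have "\<dots> = a / a ^ p * (\<Sum>m. T m)" by (rule suminf_mult[OF \<open>summable T\<close>])
  also have "\<dots> \<le> a / a ^ p * abs_power_sum c a"
    using abs_tail_le_abs_power_sum[of a p] a by (intro mult_left_mono) (simp_all add: T_def)
  finally show ?thesis by simp
qed

lemma abs_singular_part_le: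
  assumes a: "0 < a"
  shows "\<bar>\<Sum>i=1..Suc q. c (Suc q - i) * inv_pow_primitive a i\<bar>
         \<le> \<bar>c q\<bar> * \<bar>ln a\<bar> + real (Suc q) * (abs_power_sum c a / a ^ q)"
proof -
  have "\<bar>\<Sum>i=1..Suc q. c (Suc q - i) * inv_pow_primitive a i\<bar>
        \<le> (\<Sum>i=1..Suc q. \<bar>c (Suc q - i) * inv_pow_primitive a i\<bar>)"
    by (rule sum_abs)
  also have "\<dots> \<le> (\<Sum>i=1..Suc q. of_bool (i = 1) * (\<bar>c q\<bar> * \<bar>ln a\<bar>) + abs_power_sum c a / a ^ q)"
  proof (rule sum_mono)
    fix i assume i: "i \<in> {1..Suc q}"
    have "0 \<le> abs_power_sum c a / a ^ q"
      using abs_term_le_abs_power_sum[of a 0] a by simp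
    moreover have "\<bar>c (Suc q - i)\<bar> / (real (i - 1) * a ^ (i - 1)) \<le> abs_power_sum c a / a ^ q"
      if "2 \<le> i"
    proof -
      have "\<bar>c (Suc q - i)\<bar> / (real (i - 1) * a ^ (i - 1)) \<le> \<bar>c (Suc q - i)\<bar> / a ^ (i - 1)"
        using that a by (intro divide_left_mono) auto
      also have "a ^ q = a ^ (i - 1) * a ^ (Suc q - i)" using i by (simp flip: power_add)
      with a have "\<bar>c (Suc q - i)\<bar> / a ^ (i - 1) = \<bar>c (Suc q - i)\<bar> * a ^ (Suc q - i) / a ^ q"
        by (simp add: field_simps)
      also have "\<dots> \<le> abs_power_sum c a / a ^ q"
        using abs_term_le_abs_power_sum[of a "Suc q - i"] a by (simp add: divide_right_mono)
      finally show ?thesis .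
    qed
    ultimately show "\<bar>c (Suc q - i) * inv_pow_primitive a i\<bar>
        \<le> of_bool (i = 1) * (\<bar>c q\<bar> * \<bar>ln a\<bar>) + abs_power_sum c a / a ^ q"
      using i a by (cases "i = 1") (auto simp: inv_pow_primitive_def abs_mult)
  qed
  also have "\<dots> = \<bar>c q\<bar> * \<bar>ln a\<bar> + real (Suc q) * (abs_power_sum c a / a ^ q)"
    by (simp add: sum.distrib)
  finally show ?thesis .
qed

lemma FP_power_series_decay:
  assumes \<omega>: "0 < \<omega>" "\<omega> < a"
  shows "(\<lambda>p. \<omega> ^ p * FP_power_series c p a) \<longlonglongrightarrow> 0"
proof -
  have a: "0 < a" using \<omega> by simp
  define M where "M = abs_power_sum c a"
  define b where "b = \<omega> / a"
  have b: "0 < b" "b < 1" using \<omega> unfolding b_def by auto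
  define B where "B = (\<lambda>q. \<omega> * \<bar>ln a\<bar> * (\<bar>c q\<bar> * \<omega> ^ q)
                          + a * M * (real (Suc q) * b ^ Suc q) + a * M * b ^ Suc q)"
  have "(\<lambda>q. \<omega> ^ Suc q * FP_power_series c (Suc q) a) \<longlonglongrightarrow> 0"
  proof (rule Lim_null_comparison[OF always_eventually, OF allI])
    fix q
    have "\<bar>FP_power_series c (Suc q) a\<bar>
          \<le> \<bar>c q\<bar> * \<bar>ln a\<bar> + real (Suc q) * (M / a ^ q) + a * M / a ^ Suc q"
      unfolding FP_power_series_def M_def
      using abs_singular_part_le[OF a, of q] abs_shifted_primitive_le[OF a, of "Suc q"]
      by (intro order.trans[OF abs_triangle_ineq]) linarith
    then have "norm (\<omega> ^ Suc q * FP_power_series c (Suc q) a)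
               \<le> \<omega> ^ Suc q * (\<bar>c q\<bar> * \<bar>ln a\<bar> + real (Suc q) * (M / a ^ q) + a * M / a ^ Suc q)"
      using \<omega> by (simp add: abs_mult mult_left_mono)
    also have "\<dots> = B q"
      unfolding B_def b_def using a by (simp add: field_simps power_divide)
    finally show "norm (\<omega> ^ Suc q * FP_power_series c (Suc q) a) \<le> B q" .
  next
    have coeff: "(\<lambda>q. \<bar>c q\<bar> * \<omega> ^ q) \<longlonglongrightarrow> 0"
      using \<omega> by (intro summable_LIMSEQ_zero summable_abs) simp
    have linear_geometric: "(\<lambda>q. real (Suc q) * b ^ Suc q) \<longlonglongrightarrow> 0"
      using LIMSEQ_Suc[OF powser_times_n_limit_0[of b]] b by simp
    have geometric: "(\<lambda>q. b ^ Suc q) \<longlonglongrightarrow> 0"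
      using LIMSEQ_Suc[OF LIMSEQ_power_zero[of b]] b by simp
    show "B \<longlonglongrightarrow> 0"
      using tendsto_add[OF tendsto_add[OF tendsto_mult_right_zero[OF coeff]
              tendsto_mult_right_zero[OF linear_geometric]] tendsto_mult_right_zero[OF geometric]]
      unfolding B_def by simp
  qed
  then show ?thesis by (rule LIMSEQ_imp_Suc)
qed

end

section \<open>The case \<open>n = 1\<close>\<close>

lemma has_FP_one:
  assumes "0 < a"
  shows "has_FP (\<lambda>_. 1) (Suc k) a (inv_pow_primitive a (Suc k))"
proof -
  interpret one: real_power_series "\<lambda>j. of_bool (j = 0)" "\<lambda>_. 1"
  proof
    fix x :: real
    have "(\<lambda>j. of_bool (j = 0) * x ^ j) = (\<lambda>j. if j = 0 then 1 else 0)"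
      by (auto simp: fun_eq_iff)
    then show "(\<lambda>j. of_bool (j = 0) * x ^ j) sums 1" using sums_single[of 0 "\<lambda>_. 1::real"] by simp
  qed
  have "(\<Sum>i=1..Suc k. of_bool (Suc k - i = 0) * inv_pow_primitive a i)
        = (\<Sum>i=1..Suc k. if i = Suc k then inv_pow_primitive a i else 0)"
    by (intro sum.cong) auto
  moreover have "shifted_primitive (\<lambda>j. of_bool (j = 0)) (Suc k) a = 0"
  proof -
    have "integrated_coeffs (\<lambda>m. of_bool (m + Suc k = 0)) = (\<lambda>_. 0)"
      by (simp add: integrated_coeffs_def fun_eq_iff)
    then show ?thesis by (simp add: shifted_primitive_def)
  qed
  ultimately have FP_one: "FP_power_series (\<lambda>j. of_bool (j = 0)) (Suc k) a = inv_pow_primitive a (Suc k)"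
    by (simp add: FP_power_series_def)
  show ?thesis using one.has_FP_g[OF assms, of "Suc k"] unfolding FP_one .
qed

lemma sums_inv_pow_primitive:
  assumes "0 < \<omega>" "\<omega> < a"
  shows "(\<lambda>k. (- \<omega>) ^ k * inv_pow_primitive a (Suc k)) sums ln (\<omega> + a)"
proof -
  have "\<bar>\<omega> / a\<bar> < 1" using assms by simp
  then have "(\<lambda>k. (if k = 0 then ln a else 0) + - ((- (\<omega> / a)) ^ k) / real k)
               sums (ln a + ln (1 + \<omega> / a))"
    by (rule sums_add[OF sums_single[of 0 "\<lambda>_. ln a"] ln_series'])
  moreover have "(if k = 0 then ln a else 0) + - ((- (\<omega> / a)) ^ k) / real k
                 = (- \<omega>) ^ k * inv_pow_primitive a (Suc k)" for k
  proof (cases "k = 0")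
    case False
    have "(- (\<omega> / a)) ^ k = (- \<omega>) ^ k / a ^ k"
      by (metis minus_divide_left power_divide)
    with False assms show ?thesis by (simp add: inv_pow_primitive_def)
  qed (simp add: inv_pow_primitive_def)
  moreover have "ln a + ln (1 + \<omega> / a) = ln (\<omega> + a)"
  proof -
    have "0 < 1 + \<omega> / a" using assms by (simp add: add_pos_pos)
    with assms have "ln a + ln (1 + \<omega> / a) = ln (a * (1 + \<omega> / a))" by (simp add: ln_mult)
    also have "a * (1 + \<omega> / a) = \<omega> + a" using assms by (simp add: field_simps)
    finally show ?thesis .
  qed
  ultimately show ?thesis by simp
qed

lemma integral_inverse_shift:
  fixes \<omega> a :: real
  assumes "0 < \<omega>" "0 \<le> a"
  shows "integral {0..a} (\<lambda>x. 1 / (\<omega> + x)) = ln (\<omega> + a) - ln \<omega>"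
proof -
  have "((\<lambda>x. 1 / (\<omega> + x)) has_integral ln (\<omega> + a) - ln (\<omega> + 0)) {0..a}"
  proof (rule fundamental_theorem_of_calculus[where f = "\<lambda>x. ln (\<omega> + x)"])
    fix x assume "x \<in> {0..a}"
    with assms have "((\<lambda>x. ln (\<omega> + x)) has_real_derivative 1 / (\<omega> + x)) (at x)"
      by (auto intro!: derivative_eq_intros)
    then show "((\<lambda>x. ln (\<omega> + x)) has_vector_derivative 1 / (\<omega> + x)) (at x within {0..a})"
      by (simp add: has_real_derivative_iff_has_vector_derivative has_vector_derivative_at_within)
  qed (use assms in auto)
  then show ?thesis by (simp add: integral_unique)
qed

lemma gbinomial_minus_one: "((- 1 :: 'a :: field_char_0) gchoose k) = (- 1) ^ k"
  using gbinomial_minus[of "1 :: 'a" k] by (simp flip: binomial_gbinomial)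

lemma sum_alternating_telescope:
  fixes w :: "'a :: comm_ring_1"
  shows "(\<Sum>k<n. (- w) ^ k * (B k + w * B (Suc k))) = B 0 - (- w) ^ n * B n"
  by (induction n) (auto simp: algebra_simps)

context real_power_series
begin

lemma FP_integral_of_split:
  fixes f :: "real \<Rightarrow> real"
  assumes split: "\<And>x. f x = f (- \<omega>) + (x + \<omega>) * g x" and a: "0 < a"
  shows "FP_integral f (Suc k) a
         = f (- \<omega>) * inv_pow_primitive a (Suc k)
           + (FP_power_series c k a + \<omega> * FP_power_series c (Suc k) a)"
proof -
  have "has_FP (\<lambda>x. (x + \<omega>) * g x) (Suc k) a
          (1 * FP_power_series c k a + \<omega> * FP_power_series c (Suc k) a)"
    by (rule has_FP_linear[OF has_FP_g[OF a] has_FP_g[OF a] continuous_on_g continuous_on_g])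
       (simp add: field_simps)
  then have "has_FP f (Suc k) a (f (- \<omega>) * inv_pow_primitive a (Suc k)
               + 1 * (1 * FP_power_series c k a + \<omega> * FP_power_series c (Suc k) a))"
  proof (rule has_FP_linear[OF has_FP_one[OF a]])
    show "continuous_on {0<..} (\<lambda>x. (x + \<omega>) * g x)"
      by (intro continuous_intros continuous_on_g)
    show "f x / x ^ Suc k = f (- \<omega>) * (1 / x ^ Suc k) + 1 * ((x + \<omega>) * g x / x ^ Suc k)" for x
      by (subst split) (simp add: add_divide_distrib)
  qed simp
  then show ?thesis by (simp add: FP_integral_unique)
qed

lemma integral_of_split:
  fixes f :: "real \<Rightarrow> real"
  assumes split: "\<And>x. f x = f (- \<omega>) + (x + \<omega>) * g x" and \<omega>: "0 < \<omega>" and a: "0 \<le> a"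
  shows "integral {0..a} (\<lambda>x. f x / (\<omega> + x)) = f (- \<omega>) * (ln (\<omega> + a) - ln \<omega>) + integral {0..a} g"
proof -
  have "integral {0..a} (\<lambda>x. f x / (\<omega> + x)) = integral {0..a} (\<lambda>x. f (- \<omega>) * (1 / (\<omega> + x)) + g x)"
    using \<omega> by (intro integral_cong) (subst split, simp add: field_simps)
  also have "\<dots> = f (- \<omega>) * integral {0..a} (\<lambda>x. 1 / (\<omega> + x)) + integral {0..a} g"
  proof (intro integral_unique has_integral_add has_integral_mult_right integrable_integral)
    show "(\<lambda>x. 1 / (\<omega> + x)) integrable_on {0..a}"
      using \<omega> by (intro integrable_continuous_interval continuous_intros) auto
    show "g integrable_on {0..a}"
      by (intro integrable_continuous_interval continuous_on_g)
  qed
  finally show ?thesis using \<omega> a by (simp add: integral_inverse_shift)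
qed

lemma FP_expansion_1:
  fixes f :: "real \<Rightarrow> real"
  assumes split: "\<And>x. f x = f (- \<omega>) + (x + \<omega>) * g x" and \<omega>: "0 < \<omega>" "\<omega> < a"
  shows "(\<lambda>k. ((- 1) gchoose k) * \<omega> ^ k * FP_integral f (k + 1) a)
           sums (integral {0..a} (\<lambda>x. f x / (\<omega> + x) ^ 1) - Delta_sc f 1 \<omega>)"
proof -
  have a: "0 < a" using \<omega> by simp
  define V where "V k = FP_power_series c k a" for k
  have V_decay: "(\<lambda>n. (- \<omega>) ^ n * V n) \<longlonglongrightarrow> 0"
  proof (rule tendsto_norm_zero_cancel)
    have "(\<lambda>n. norm (\<omega> ^ n * V n)) \<longlonglongrightarrow> 0"
      unfolding V_def by (intro tendsto_norm_zero FP_power_series_decay \<omega>)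
    then show "(\<lambda>n. norm ((- \<omega>) ^ n * V n)) \<longlonglongrightarrow> 0"
      by (simp add: abs_mult power_abs)
  qed
  have partial_sums: "(\<Sum>k<n. ((- 1) gchoose k) * \<omega> ^ k * FP_integral f (k + 1) a)
      = f (- \<omega>) * (\<Sum>k<n. (- \<omega>) ^ k * inv_pow_primitive a (Suc k)) + (V 0 - (- \<omega>) ^ n * V n)" for n
  proof -
    have "(\<Sum>k<n. ((- 1) gchoose k) * \<omega> ^ k * FP_integral f (k + 1) a)
          = (\<Sum>k<n. f (- \<omega>) * ((- \<omega>) ^ k * inv_pow_primitive a (Suc k))
                    + (- \<omega>) ^ k * (V k + \<omega> * V (Suc k)))"
      unfolding gbinomial_minus_one Suc_eq_plus1[symmetric] FP_integral_of_split[OF split a] V_def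
      by (intro sum.cong refl) (simp add: power_minus[of \<omega>] algebra_simps)
    also have "\<dots> = f (- \<omega>) * (\<Sum>k<n. (- \<omega>) ^ k * inv_pow_primitive a (Suc k))
                      + (\<Sum>k<n. (- \<omega>) ^ k * (V k + \<omega> * V (Suc k)))"
      by (simp add: sum.distrib sum_distrib_left)
    also have "(\<Sum>k<n. (- \<omega>) ^ k * (V k + \<omega> * V (Suc k))) = V 0 - (- \<omega>) ^ n * V n"
      by (rule sum_alternating_telescope)
    finally show ?thesis .
  qed
  have "(\<lambda>n. f (- \<omega>) * (\<Sum>k<n. (- \<omega>) ^ k * inv_pow_primitive a (Suc k)) + (V 0 - (- \<omega>) ^ n * V n))
        \<longlonglongrightarrow> f (- \<omega>) * ln (\<omega> + a) + (V 0 - 0)"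
    using sums_inv_pow_primitive[OF \<omega>] V_decay unfolding sums_def by (intro tendsto_intros)
  moreover have "f (- \<omega>) * ln (\<omega> + a) + V 0 = integral {0..a} (\<lambda>x. f x / (\<omega> + x) ^ 1) - Delta_sc f 1 \<omega>"
    unfolding power_one_right integral_of_split[OF split \<omega>(1) less_imp_le[OF a]] Delta_sc_def
    using integral_g a by (simp add: V_def FP_power_series_def algebra_simps)
  ultimately show ?thesis
    unfolding sums_def partial_sums by simp
qed

end

section \<open>Differentiation in \<open>\<omega>\<close>\<close>

text \<open>\<open>Delta_chain D m\<close> is \<open>\<Delta>_sc^(m+1)\<close> with \<open>f^(k)\<close> replaced by \<open>D k\<close>.\<close>

definition Delta_chain :: "(nat \<Rightarrow> real \<Rightarrow> real) \<Rightarrow> nat \<Rightarrow> real \<Rightarrow> real" where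
  "Delta_chain D m w = - (1 / fact m) * D m (- w) * ln w
                       + (\<Sum>k<m. D k (- w) / (fact k * real (m - k) * w ^ (m - k)))"

lemma Delta_sc_eq_Delta_chain: "Delta_sc f (Suc m) w = Delta_chain (\<lambda>k. (deriv ^^ k) f) m w"
proof (cases m)
  case (Suc m')
  then have "{0..Suc m - 2} = {..<m}" by auto
  with Suc show ?thesis unfolding Delta_sc_def Delta_chain_def by (simp add: algebra_simps)
qed (simp add: Delta_sc_def Delta_chain_def)

lemma Delta_chain_derivative_sum:
  fixes d :: "nat \<Rightarrow> real"
  assumes w: "0 < w"
  shows "- (d m / (fact m * w))
         + (\<Sum>k<m. - d (Suc k) / (fact k * real (m - k) * w ^ (m - k)) - d k / (fact k * w ^ Suc (m - k)))
       = - real (Suc m) * (\<Sum>k<Suc m. d k / (fact k * real (Suc m - k) * w ^ (Suc m - k)))"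
proof -
  define u where "u k = d k / (fact k * w ^ (Suc m - k))" for k
  define v where "v k = real k * d k / (fact k * real (Suc m - k) * w ^ (Suc m - k))" for k
  define U where "U = (\<Sum>k<m. d k / (fact k * w ^ Suc (m - k)))"
  define V where "V = (\<Sum>k<m. d (Suc k) / (fact k * real (m - k) * w ^ (m - k)))"
  have "real (Suc m) * (\<Sum>k<Suc m. d k / (fact k * real (Suc m - k) * w ^ (Suc m - k)))
        = (\<Sum>k<Suc m. u k + v k)"
    unfolding sum_distrib_left
  proof (intro sum.cong refl)
    fix k assume "k \<in> {..<Suc m}"
    define r where "r = real (Suc m - k)"
    have "real (Suc m) = r + real k" "0 < r" using \<open>k \<in> {..<Suc m}\<close> by (auto simp: r_def)
    moreover have "(r + real k) * (d k / (fact k * r * w ^ (Suc m - k)))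
                   = d k / (fact k * w ^ (Suc m - k)) + real k * d k / (fact k * r * w ^ (Suc m - k))"
      using \<open>0 < r\<close> w by (simp add: field_simps)
    ultimately show "real (Suc m) * (d k / (fact k * real (Suc m - k) * w ^ (Suc m - k))) = u k + v k"
      unfolding u_def v_def r_def by simp
  qed
  also have "\<dots> = (\<Sum>k<Suc m. u k) + (v 0 + (\<Sum>k<m. v (Suc k)))"
    by (simp add: sum.distrib sum.lessThan_Suc_shift del: sum.lessThan_Suc)
  also have "(\<Sum>k<Suc m. u k) = U + d m / (fact m * w)"
    unfolding u_def U_def by (simp add: Suc_diff_le)
  also have "(\<Sum>k<m. v (Suc k)) = V"
    unfolding V_def v_def by (intro sum.cong refl) (simp add: fact_Suc)
  finally have "real (Suc m) * (\<Sum>k<Suc m. d k / (fact k * real (Suc m - k) * w ^ (Suc m - k)))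
               = U + d m / (fact m * w) + V"
    by (simp add: v_def)
  moreover have "(\<Sum>k<m. - d (Suc k) / (fact k * real (m - k) * w ^ (m - k)) - d k / (fact k * w ^ Suc (m - k)))
                 = - V - U"
    unfolding U_def V_def by (simp add: sum_subtractf sum_negf)
  ultimately show ?thesis by linarith
qed

locale derivative_chain =
  fixes D :: "nat \<Rightarrow> real \<Rightarrow> real"
  assumes has_real_derivative_chain: "\<And>k x. (D k has_real_derivative D (Suc k) x) (at x)"
begin

lemma has_real_derivative_reflected:
  "((\<lambda>w. D k (- w)) has_real_derivative - D (Suc k) (- w)) (at w)"
  using DERIV_chain2[OF has_real_derivative_chain[of k "- w"] DERIV_minus[OF DERIV_ident]] by simp

lemma has_real_derivative_reflected_divide_power:
  assumes w: "0 < w" and C: "C \<noteq> 0"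
  shows "((\<lambda>w. D k (- w) / (C * w ^ j)) has_real_derivative
          - D (Suc k) (- w) / (C * w ^ j) - D k (- w) * real j / (C * w ^ Suc j)) (at w)"
proof -
  have "((\<lambda>w. D k (- w) / (C * w ^ j)) has_real_derivative
        (- D (Suc k) (- w) * (C * w ^ j) - C * (real j * w ^ (j - Suc 0)) * D k (- w))
          / (C * w ^ j) ^ Suc (Suc 0)) (at w)"
    using w C by (intro DERIV_quotient[OF has_real_derivative_reflected DERIV_cmult[OF DERIV_pow]]) simp
  moreover have "(- D (Suc k) (- w) * (C * w ^ j) - C * (real j * w ^ (j - Suc 0)) * D k (- w))
                   / (C * w ^ j) ^ Suc (Suc 0)
      = - D (Suc k) (- w) / (C * w ^ j) - D k (- w) * real j / (C * w ^ Suc j)"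
    using w C by (cases j) (simp_all add: field_simps power2_eq_square)
  ultimately show ?thesis by simp
qed

lemma has_real_derivative_Delta_chain:
  assumes w: "0 < w"
  shows "(Delta_chain D m has_real_derivative - real (Suc m) * Delta_chain D (Suc m) w) (at w)"
proof -
  have "(Delta_chain D m has_real_derivative
          (- (1 / fact m) * - D (Suc m) (- w)) * ln w + 1 / w * (- (1 / fact m) * D m (- w))
          + (\<Sum>k<m. - D (Suc k) (- w) / (fact k * real (m - k) * w ^ (m - k))
                    - D k (- w) * real (m - k) / (fact k * real (m - k) * w ^ Suc (m - k)))) (at w)"
    unfolding Delta_chain_def[abs_def]
    using w by (intro DERIV_add DERIV_mult DERIV_cmult has_real_derivative_reflected DERIV_ln_divide
                  DERIV_sum has_real_derivative_reflected_divide_power) auto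
  moreover have "(- (1 / fact m) * - D (Suc m) (- w)) * ln w + 1 / w * (- (1 / fact m) * D m (- w))
          + (\<Sum>k<m. - D (Suc k) (- w) / (fact k * real (m - k) * w ^ (m - k))
                    - D k (- w) * real (m - k) / (fact k * real (m - k) * w ^ Suc (m - k)))
        = - real (Suc m) * Delta_chain D (Suc m) w"
  proof -
    define S where "S = (\<Sum>k<m. - D (Suc k) (- w) / (fact k * real (m - k) * w ^ (m - k))
                                 - D k (- w) / (fact k * w ^ Suc (m - k)))"
    define T where "T = (\<Sum>k<Suc m. D k (- w) / (fact k * real (Suc m - k) * w ^ (Suc m - k)))"
    have S: "(\<Sum>k<m. - D (Suc k) (- w) / (fact k * real (m - k) * w ^ (m - k))
                  - D k (- w) * real (m - k) / (fact k * real (m - k) * w ^ Suc (m - k))) = S"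
      unfolding S_def by (intro sum.cong refl) simp
    have T: "Delta_chain D (Suc m) w = - (1 / fact (Suc m)) * D (Suc m) (- w) * ln w + T"
      unfolding Delta_chain_def T_def by simp
    have "- (D m (- w) / (fact m * w)) + S = - real (Suc m) * T"
      unfolding S_def T_def by (rule Delta_chain_derivative_sum[OF w])
    moreover have "ln w * (real (Suc m) * D (Suc m) (- w)) / fact (Suc m)
                   = ln w * D (Suc m) (- w) / fact m"
      by (simp add: fact_Suc)
    ultimately show ?thesis
      unfolding S T by (simp add: algebra_simps del: fact_Suc of_nat_Suc)
  qed
  ultimately show ?thesis by simp
qed

end

lemma has_real_derivative_integral_shifted_power:
  fixes f :: "real \<Rightarrow> real"
  assumes cont: "continuous_on {0..a} f" and \<omega>: "0 < \<omega>"
  shows "((\<lambda>w. integral {0..a} (\<lambda>x. f x / (w + x) ^ n)) has_real_derivative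
           - real n * integral {0..a} (\<lambda>x. f x / (\<omega> + x) ^ Suc n)) (at \<omega>)"
proof -
  define U where "U = {0::real<..}"
  have "((\<lambda>w. integral (cbox 0 a) (\<lambda>x. f x / (w + x) ^ n)) has_real_derivative
           integral (cbox 0 a) (\<lambda>x. - real n * f x / (\<omega> + x) ^ Suc n)) (at \<omega> within U)"
  proof (rule leibniz_rule_field_derivative)
    fix w x assume "w \<in> U" "x \<in> cbox 0 a"
    then have "0 < w + x" by (auto simp: U_def)
    then show "((\<lambda>w. f x / (w + x) ^ n) has_real_derivative - real n * f x / (w + x) ^ Suc n)
               (at w within U)"
      by (auto intro!: derivative_eq_intros simp: divide_simps) (cases n; simp)
  next
    fix w assume "w \<in> U"
    then show "(\<lambda>x. f x / (w + x) ^ n) integrable_on cbox 0 a"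
      using cont by (auto intro!: integrable_continuous_interval continuous_intros simp: U_def)
  next
    have "continuous_on (U \<times> cbox 0 a) (\<lambda>p. - real n * f (snd p) / (fst p + snd p) ^ Suc n)"
      using cont
      by (auto intro!: continuous_intros continuous_on_compose2[OF cont continuous_on_snd]
               simp: U_def mem_box add_pos_nonneg)
    then show "continuous_on (U \<times> cbox 0 a) (\<lambda>(w, x). - real n * f x / (w + x) ^ Suc n)"
      by (simp add: case_prod_beta)
  qed (use \<omega> in \<open>auto simp: U_def convex_real_interval\<close>)
  moreover have "at \<omega> within U = at \<omega>"
    unfolding U_def using \<omega> by (intro at_within_open) auto
  ultimately show ?thesis
    by (simp add: integral_mult_right[symmetric] mult.assoc)
qed

definition expansion_coeff :: "(real \<Rightarrow> real) \<Rightarrow> real \<Rightarrow> nat \<Rightarrow> nat \<Rightarrow> real" where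
  "expansion_coeff f a n k = ((- real n) gchoose k) * FP_integral f (k + n) a"

lemma diffs_expansion_coeff:
  "diffs (expansion_coeff f a n) k = - real n * expansion_coeff f a (Suc n) k"
proof -
  have "diffs (expansion_coeff f a n) k
        = (real (Suc k) * ((- real n) gchoose Suc k)) * FP_integral f (Suc k + n) a"
    by (simp add: diffs_def expansion_coeff_def mult.assoc)
  also have "real (Suc k) * ((- real n) gchoose Suc k) = - real n * ((- real n - 1) gchoose k)"
    by (rule gbinomial_absorption)
  also have "- real n - 1 = - real (Suc n)" by simp
  also have "Suc k + n = k + Suc n" by simp
  finally show ?thesis
    unfolding expansion_coeff_def[of f a "Suc n" k] by (simp only: mult.assoc)
qed

lemma sums_diffs_of_sums_on_interval:
  fixes b :: "nat \<Rightarrow> real"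
  assumes sums: "\<And>w. 0 < w \<Longrightarrow> w < a \<Longrightarrow> (\<lambda>k. b k * w ^ k) sums E w"
    and deriv: "(E has_real_derivative E') (at \<omega>)" and \<omega>: "0 < \<omega>" "\<omega> < a"
  shows "(\<lambda>k. diffs b k * \<omega> ^ k) sums E'"
proof -
  have summable: "summable (\<lambda>k. b k * x ^ k)" if "norm x < a" for x :: real
  proof -
    define r where "r = (\<bar>x\<bar> + a) / 2"
    have r: "0 < r" "r < a" "norm x < norm r" using that unfolding r_def by auto
    from sums_summable[OF sums[OF r(1,2)]] r(3) show ?thesis by (rule powser_inside)
  qed
  have "((\<lambda>w. \<Sum>k. b k * w ^ k) has_real_derivative (\<Sum>k. diffs b k * \<omega> ^ k)) (at \<omega>)"
    using summable \<omega> by (intro termdiffs_strong'[of a]) auto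
  then have "(E has_real_derivative (\<Sum>k. diffs b k * \<omega> ^ k)) (at \<omega>)"
  proof (rule has_field_derivative_transform_within_open[of _ _ _ "{0<..<a}"])
    show "(\<Sum>k. b k * w ^ k) = E w" if "w \<in> {0<..<a}" for w
      using sums that by (simp add: sums_iff)
  qed (use \<omega> in auto)
  with deriv have "(\<Sum>k. diffs b k * \<omega> ^ k) = E'"
    by (rule DERIV_unique[rotated])
  moreover have "summable (\<lambda>k. diffs b k * \<omega> ^ k)"
    using summable \<omega> by (intro termdiff_converges[of \<omega> a]) auto
  ultimately show ?thesis by (simp add: sums_iff)
qed

lemma (in derivative_chain) FP_expansion_Suc:
  fixes f :: "real \<Rightarrow> real"
  assumes cont: "continuous_on {0..a} f"
    and IH: "\<And>w. 0 < w \<Longrightarrow> w < a \<Longrightarrow> (\<lambda>k. expansion_coeff f a (Suc m) k * w ^ k)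
               sums (integral {0..a} (\<lambda>x. f x / (w + x) ^ Suc m) - Delta_chain D m w)"
    and \<omega>: "0 < \<omega>" "\<omega> < a"
  shows "(\<lambda>k. expansion_coeff f a (Suc (Suc m)) k * \<omega> ^ k)
           sums (integral {0..a} (\<lambda>x. f x / (\<omega> + x) ^ Suc (Suc m)) - Delta_chain D (Suc m) \<omega>)"
proof -
  have "((\<lambda>w. integral {0..a} (\<lambda>x. f x / (w + x) ^ Suc m) - Delta_chain D m w) has_real_derivative
          - real (Suc m) * integral {0..a} (\<lambda>x. f x / (\<omega> + x) ^ Suc (Suc m))
          - - real (Suc m) * Delta_chain D (Suc m) \<omega>) (at \<omega>)"
    using DERIV_diff[OF has_real_derivative_integral_shifted_power[OF cont \<omega>(1)]
                        has_real_derivative_Delta_chain[OF \<omega>(1)]] .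
  from sums_diffs_of_sums_on_interval[OF IH this \<omega>]
  have "(\<lambda>k. - real (Suc m) * (expansion_coeff f a (Suc (Suc m)) k * \<omega> ^ k))
          sums (- real (Suc m) * (integral {0..a} (\<lambda>x. f x / (\<omega> + x) ^ Suc (Suc m))
                                  - Delta_chain D (Suc m) \<omega>))"
    by (simp add: diffs_expansion_coeff algebra_simps)
  then show ?thesis
    by (subst (asm) sums_mult_iff) simp_all
qed

section \<open>Entire functions\<close>

lemma has_real_derivative_Re_entire:
  assumes "F holomorphic_on UNIV"
  shows "((\<lambda>x. Re (F (of_real x))) has_real_derivative Re (deriv F (of_real x))) (at x)"
proof -
  have "(F has_field_derivative deriv F (of_real x)) (at (of_real x))"
    using holomorphic_derivI[OF assms open_UNIV UNIV_I] by simp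
  then have "((\<lambda>x. F (of_real x)) has_vector_derivative deriv F (of_real x)) (at x)"
    using has_vector_derivative_real_field[of F _ x UNIV] by simp
  then show ?thesis by (rule has_field_derivative_Re)
qed

lemma higher_deriv_Re_entire:
  assumes "F holomorphic_on UNIV"
  shows "(deriv ^^ k) (\<lambda>x. Re (F (of_real x))) = (\<lambda>x. Re ((deriv ^^ k) F (of_real x)))"
proof (induction k)
  case (Suc k)
  have "(deriv ^^ k) F holomorphic_on UNIV"
    by (rule holomorphic_higher_deriv[OF assms open_UNIV])
  from has_real_derivative_Re_entire[OF this] show ?case
    by (simp add: Suc.IH fun_eq_iff DERIV_imp_deriv)
qed simp

lemma real_power_series_Re_entire:
  assumes "F holomorphic_on UNIV"
  shows "real_power_series (\<lambda>j. Re ((deriv ^^ j) F 0 / fact j)) (\<lambda>x. Re (F (of_real x)))"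
proof
  fix x :: real
  have "(\<lambda>n. (deriv ^^ n) F 0 / fact n * (of_real x - 0) ^ n) sums F (of_real x)"
    using assms
    by (intro holomorphic_power_series[where r = "\<bar>x\<bar> + 1"]) (auto intro: holomorphic_on_subset)
  then have "(\<lambda>n. of_real (x ^ n) * ((deriv ^^ n) F 0 / fact n)) sums F (of_real x)"
    by (simp add: mult.commute)
  from sums_Re[OF this]
  show "(\<lambda>j. Re ((deriv ^^ j) F 0 / fact j) * x ^ j) sums Re (F (of_real x))"
    by (simp only: scaleR_conv_of_real[symmetric]) (simp add: mult.commute)
qed

lemma entire_divided_difference:
  assumes entire: "F holomorphic_on UNIV"
    and ext: "\<And>x::real. F (of_real x) = of_real (f x)"
  obtains c q where "real_power_series c q" "\<And>x. f x = f w + (x - w) * q x"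
proof
  define Q where "Q = (\<lambda>z. if z = of_real w then deriv F (of_real w)
                           else (F z - F (of_real w)) / (z - of_real w))"
  have "Q holomorphic_on UNIV"
    unfolding Q_def by (rule pole_lemma[OF entire]) simp
  then show "real_power_series (\<lambda>j. Re ((deriv ^^ j) Q 0 / fact j)) (\<lambda>x. Re (Q (of_real x)))"
    by (rule real_power_series_Re_entire)
  show "f x = f w + (x - w) * Re (Q (of_real x))" for x
  proof (cases "x = w")
    case False
    then have "Q (of_real x) = of_real ((f x - f w) / (x - w))"
      unfolding Q_def by (simp add: ext)
    with False show ?thesis by simp
  qed simp
qed

lemma derivative_chain_entire:
  assumes entire: "F holomorphic_on UNIV"
    and ext: "\<And>x::real. F (of_real x) = of_real (f x)"
  shows "derivative_chain (\<lambda>k. (deriv ^^ k) f)"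
proof
  fix k and x :: real
  have f: "f = (\<lambda>x. Re (F (of_real x)))" using ext by (simp add: fun_eq_iff)
  have "(deriv ^^ k) F holomorphic_on UNIV"
    by (rule holomorphic_higher_deriv[OF entire open_UNIV])
  from has_real_derivative_Re_entire[OF this]
  show "((deriv ^^ k) f has_real_derivative (deriv ^^ Suc k) f x) (at x)"
    unfolding f higher_deriv_Re_entire[OF entire] by simp
qed

lemma FP_expansion_entire:
  assumes entire: "F holomorphic_on UNIV"
    and ext: "\<And>x::real. F (of_real x) = of_real (f x)"
    and \<omega>: "0 < \<omega>" "\<omega> < a"
  shows "(\<lambda>k. ((- real (Suc m)) gchoose k) * \<omega> ^ k * FP_integral f (k + Suc m) a)
           sums (integral {0..a} (\<lambda>x. f x / (\<omega> + x) ^ Suc m) - Delta_sc f (Suc m) \<omega>)"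
proof -
  interpret derivative_chain "\<lambda>k. (deriv ^^ k) f"
    by (rule derivative_chain_entire[OF entire ext])
  have "continuous_on {0..a} f"
    using has_real_derivative_chain[of 0, THEN DERIV_isCont]
    by (simp add: continuous_at_imp_continuous_on)
  have "(\<lambda>k. expansion_coeff f a (Suc m) k * w ^ k)
          sums (integral {0..a} (\<lambda>x. f x / (w + x) ^ Suc m) - Delta_chain (\<lambda>k. (deriv ^^ k) f) m w)"
    if "0 < w" "w < a" for w
    using that
  proof (induction m arbitrary: w)
    case 0
    obtain c q where "real_power_series c q" and split: "\<And>x. f x = f (- w) + (x + w) * q x"
      using entire_divided_difference[OF entire ext, where w = "- w"] by auto
    then interpret real_power_series c q by simp
    from FP_expansion_1[OF split 0] show ?case
      by (simp add: expansion_coeff_def Delta_sc_eq_Delta_chain mult_ac)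
  next
    case (Suc m)
    then show ?case
      using FP_expansion_Suc[OF \<open>continuous_on {0..a} f\<close>] by blast
  qed
  from this[OF \<omega>] show ?thesis
    by (simp add: expansion_coeff_def Delta_sc_eq_Delta_chain mult_ac)
qed

theorem theorem5:
  fixes f :: "real \<Rightarrow> real" and F :: "complex \<Rightarrow> complex"
    and a \<omega> :: real and n :: nat
  assumes entire: "F holomorphic_on UNIV"
    and ext: "\<And>x::real. F (complex_of_real x) = complex_of_real (f x)"
    and n: "n \<ge> 1"
    and \<omega>: "0 < \<omega>" "\<omega> < a"
  shows "(\<lambda>k. ((- real n) gchoose k) * \<omega> ^ k * FP_integral f (k + n) a)
           sums (integral {0..a} (\<lambda>x. f x / (\<omega> + x) ^ n) - Delta_sc f n \<omega>)"
proof -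
  obtain m where "n = Suc m" using n by (cases n) auto
  with FP_expansion_entire[OF entire ext \<omega>] show ?thesis by simp
qed

end
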